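(* Assume the setting below with $\mu_+(\infty)\le1$ and $\mu_-(\infty)<\infty$, and (A1), (A4), (A5), (A6). Let $0<\mu_0\le\mu_1<\infty$ be constants with $\mu_0\le f'(\rho)\le\mu_1$ and $\mu_0\rho\le f(\rho)\le\mu_1\rho$ for all $\rho\ge0$. Let $r$ be a regular equilibrium solution with $r(1)=\lambda>0$. Then $$\eta_0\tau(\rho)\le r'(\rho)\le\eta_1\tau(\rho)\qquad\text{for all }\rho\in(0,1],$$ where $\eta_0=\min\{\mu_0/\mu_1,\ q_0^{-1}(\mu_1/\mu_0)\}$ and $\eta_1=\max\{\mu_1/\mu_0,\ q_1^{-1}(\mu_0/\mu_1)\}$.
   Context: Setting: $n\ge2$; $\kappa$ continuous on $[0,\infty)$, $\kappa_\pm=\max\{\pm\kappa,0\}$, $\mu_\pm(\lambda)=\int_0^\lambda s\kappa_\pm(s)ds$ (and $\mu_\pm(\infty)$ the corresponding integrals over $[0,\infty)$); $f$ solves $f''+\kappa f=0$, $f(0)=0$, $f'(0)=1$. $\Phi(v_1,\dots,v_n)=\sum_i\phi(v_i)+h(v_1\cdots v_n)$, $\tau(\rho)=f(r(\rho))/f(\rho)$. An equilibrium solution with $r(1)=\lambda$ is $r\in C^1(0,1]$, twice differentiable on $(0,1)$, $r'>0$ on $(0,1]$, $r(0):=\lim_{\rho\to0^+}r(\rho)\ge0$, $r(1)=\lambda$, satisfying on $(0,1)$ $$f(\rho)\big[\phi''(r')+h''(r'\tau^{n-1})\tau^{2(n-1)}\big]r''=(n-1)\big[f'(r)\phi'(\tau)-f'(\rho)\phi'(r')\big]-(n-1)\big(f'(r)r'-f'(\rho)\tau\big)h''(r'\tau^{n-1})\,r'\tau^{2n-3};$$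 regular means $r(0)=0$. (A1) $h$ is $C^2$ and strictly convex. (A4) $\phi:(0,\infty)\to(0,\infty)$ is $C^2$ and convex. (A5) $v\phi'(v)$ is increasing. (A6) there is $t_0\ge0$ with $\phi'(t_0)=0$; $q_1(s)=\sup_{v>t_0}\phi'(v)/\phi'(sv)$ ($s\ge1$), $q_0(s)=\inf_{v>t_0/s}\phi'(v)/\phi'(sv)$ ($s\in(0,1]$) satisfy $q_1\in C^1[1,\infty)$, $q_0\in C^1(0,1]$, $q_1(s)\to0$ as $s\to\infty$, $q_0(s)\to\infty$ as $s\to0^+$, $q_1'<0$, $q_0'<0$. *)

theory Defs
  imports "HOL-Analysis.Analysis"
begin

definition strictly_convex_on :: "real set \<Rightarrow> (real \<Rightarrow> real) \<Rightarrow> bool" where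
  "strictly_convex_on S g \<longleftrightarrow> convex S \<and>
     (\<forall>x\<in>S. \<forall>y\<in>S. x \<noteq> y \<longrightarrow> (\<forall>t. 0 < t \<and> t < 1 \<longrightarrow>
        g ((1 - t) * x + t * y) < (1 - t) * g x + t * g y))"

definition kappa_pos :: "(real \<Rightarrow> real) \<Rightarrow> real \<Rightarrow> real" where
  "kappa_pos \<kappa> s = max (\<kappa> s) 0"

definition kappa_neg :: "(real \<Rightarrow> real) \<Rightarrow> real \<Rightarrow> real" where
  "kappa_neg \<kappa> s = max (- \<kappa> s) 0"

definition mu_pos_inf :: "(real \<Rightarrow> real) \<Rightarrow> ennreal" where
  "mu_pos_inf \<kappa> = (\<integral>\<^sup>+ s. ennreal (s * kappa_pos \<kappa> s) * indicator {0..} s \<partial>lborel)"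

definition mu_neg_inf :: "(real \<Rightarrow> real) \<Rightarrow> ennreal" where
  "mu_neg_inf \<kappa> = (\<integral>\<^sup>+ s. ennreal (s * kappa_neg \<kappa> s) * indicator {0..} s \<partial>lborel)"

definition q1_fun :: "(real \<Rightarrow> real) \<Rightarrow> real \<Rightarrow> real \<Rightarrow> real" where
  "q1_fun dphi t0 s = (SUP v\<in>{t0<..}. dphi v / dphi (s * v))"

definition q0_fun :: "(real \<Rightarrow> real) \<Rightarrow> real \<Rightarrow> real \<Rightarrow> real" where
  "q0_fun dphi t0 s = (INF v\<in>{t0 / s<..}. dphi v / dphi (s * v))"

definition tau_fun :: "(real \<Rightarrow> real) \<Rightarrow> (real \<Rightarrow> real) \<Rightarrow> real \<Rightarrow> real" where
  "tau_fun f r \<rho> = f (r \<rho>) / f \<rho>"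

end

theory Submission
  imports Defs
begin

(*
  Write tau = f(r)/f and G = r' tau^(n-1).  Dividing the equilibrium equation by f
  shows that the "energy" phi'(r') + c h'(G), with the weight c frozen at tau^(n-1),
  is monotone on every interval where r' stays above e1 tau (resp. below e0 tau):
  there tau is monotone (its derivative has a sign because f' lies in [mu0, mu1]),
  and the forcing term f'(r) phi'(tau) - f' phi'(r') has a sign by the growth
  conditions (A5), (A6) on phi'.  Since phi' and h' are increasing, r' itself is then
  monotone on such an interval.  A continuity ("last crossing") argument propagates
  the bound from the last point where it holds, and near the origin regularity,
  r(0+) = 0, compares r'(rho) with the chord slope r(rho)/rho, hence with tau.
*)

lemma convex_on_above_tangent_open:
  fixes g g' :: "real \<Rightarrow> real"
  assumes cvx: "convex_on I g" and I: "open I" "connected I"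
    and deriv: "\<And>z. z \<in> I \<Longrightarrow> (g has_real_derivative g' z) (at z)"
    and ab: "a \<in> I" "b \<in> I"
  shows "g' a * (b - a) \<le> g b - g a"
  using convex_on_imp_above_tangent[OF cvx I(2)] ab deriv I(1)
  by (simp add: interior_open has_field_derivative_at_within)

lemma convex_on_deriv_mono:
  fixes g g' :: "real \<Rightarrow> real"
  assumes cvx: "convex_on I g" and I: "open I" "connected I"
    and deriv: "\<And>z. z \<in> I \<Longrightarrow> (g has_real_derivative g' z) (at z)"
    and xy: "x \<in> I" "y \<in> I" "x \<le> y"
  shows "g' x \<le> g' y"
proof -
  have "g' x * (y - x) \<le> g' y * (y - x)"
    using convex_on_above_tangent_open[OF cvx I deriv, of x y]
      convex_on_above_tangent_open[OF cvx I deriv, of y x] xy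
    by (simp add: algebra_simps)
  then show ?thesis
    using xy by (cases "x = y") (auto simp: mult_le_cancel_right)
qed

lemma strictly_convex_on_imp_convex_on:
  "strictly_convex_on S g \<Longrightarrow> convex_on S g"
  unfolding strictly_convex_on_def
  by (intro convex_on_linorderI) (auto intro: less_imp_le)

lemma strictly_convex_on_deriv_strict_mono:
  fixes g g' :: "real \<Rightarrow> real"
  assumes scvx: "strictly_convex_on I g" and I: "open I" "connected I"
    and deriv: "\<And>z. z \<in> I \<Longrightarrow> (g has_real_derivative g' z) (at z)"
    and xy: "x \<in> I" "y \<in> I" "x < y"
  shows "g' x < g' y"
proof (rule ccontr)
  assume "\<not> g' x < g' y"
  note cvx = strictly_convex_on_imp_convex_on[OF scvx]
  have tangent: "g' a * (b - a) \<le> g b - g a" if "a \<in> I" "b \<in> I" for a b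
    using convex_on_above_tangent_open[of I g g' a b] cvx I deriv that by blast
  have eq: "g' x = g' y"
    using \<open>\<not> g' x < g' y\<close> convex_on_deriv_mono[OF cvx I deriv, of x y] xy by simp
  define m where "m = (1 - 1/2) * x + (1/2) * y"
  have "m \<in> I"
    using connected_contains_Icc[OF I(2) xy(1,2)] xy by (auto simp: m_def)
  have "\<forall>t. 0 < t \<and> t < 1 \<longrightarrow> g ((1 - t) * x + t * y) < (1 - t) * g x + t * g y"
    using scvx xy unfolding strictly_convex_on_def by simp
  from spec[OF this, of "1/2"] have "g m < (1 - 1/2) * g x + (1/2) * g y"
    unfolding m_def by simp
  moreover have "g' x * (m - x) \<le> g m - g x"
    using tangent[OF xy(1) \<open>m \<in> I\<close>] .
  ultimately show False
    using tangent[OF xy(1,2)] tangent[OF xy(2,1)] eq by (simp add: m_def algebra_simps)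
qed

lemma mono_on_deriv_nonneg:
  fixes g :: "real \<Rightarrow> real"
  assumes mono: "mono_on I g" and "open I" "x \<in> I"
    and deriv: "(g has_real_derivative d) (at x)"
  shows "0 \<le> d"
proof (rule ccontr)
  assume "\<not> 0 \<le> d"
  then obtain e where e: "e > 0" "\<And>h. 0 < h \<Longrightarrow> h < e \<Longrightarrow> g (x + h) < g x"
    using DERIV_neg_dec_right[OF deriv] by force
  obtain \<delta> where \<delta>: "\<delta> > 0" "ball x \<delta> \<subseteq> I"
    using \<open>open I\<close> \<open>x \<in> I\<close> openE by blast
  define h where "h = min e \<delta> / 2"
  have h: "0 < h" "h < e" "h < \<delta>"
    using e \<delta> by (auto simp: h_def)
  then have "x + h \<in> I"
    using \<delta>(2) by (auto simp: dist_norm)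
  then have "g x \<le> g (x + h)"
    using mono_onD[OF mono \<open>x \<in> I\<close>] h by simp
  then show False
    using e(2)[OF h(1,2)] by simp
qed

text \<open>A negative one-sided derivative on an interval forces strict decrease; this is how the
  \<open>C\<^sup>1\<close> hypotheses on \<open>q\<^sub>0\<close>, \<open>q\<^sub>1\<close> are used.\<close>
lemma neg_deriv_imp_strict_antimono_on:
  fixes q dq :: "real \<Rightarrow> real"
  assumes I: "connected I"
    and deriv: "\<And>s. s \<in> I \<Longrightarrow> (q has_real_derivative dq s) (at s within I)"
    and neg: "\<And>s. s \<in> I \<Longrightarrow> dq s < 0"
    and ab: "a \<in> I" "b \<in> I" "a < b"
  shows "q b < q a"
proof (rule DERIV_neg_imp_decreasing_open[OF ab(3)])
  have sub: "{a..b} \<subseteq> I"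
    using connected_contains_Icc[OF I ab(1,2)] .
  show "continuous_on {a..b} q"
    using continuous_on_subset[OF _ sub] deriv DERIV_continuous
    unfolding continuous_on_eq_continuous_within by blast
  fix x assume "a < x" "x < b"
  moreover have "{a<..<b} \<subseteq> interior I"
    using sub by (intro interior_maximal) auto
  ultimately have "x \<in> interior I"
    by auto
  then show "\<exists>y. (q has_real_derivative y) (at x) \<and> y < 0"
    using deriv neg interior_subset at_within_interior by (metis subsetD)
qed

text \<open>A strictly decreasing \<open>C\<^sup>1\<close> function attains every intermediate value exactly once,
  so \<open>the_inv_into\<close> picks the genuine preimage.\<close>
lemma strict_antimono_level_inverse:
  fixes q dq :: "real \<Rightarrow> real"
  assumes I: "connected I"
    and deriv: "\<And>s. s \<in> I \<Longrightarrow> (q has_real_derivative dq s) (at s within I)"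
    and neg: "\<And>s. s \<in> I \<Longrightarrow> dq s < 0"
    and ab: "a \<in> I" "b \<in> I" "a \<le> b" and y: "q b \<le> y" "y \<le> q a"
  shows "the_inv_into I q y \<in> I \<and> q (the_inv_into I q y) = y"
proof -
  have sub: "{a..b} \<subseteq> I"
    using connected_contains_Icc[OF I ab(1,2)] .
  have "continuous_on {a..b} q"
    using continuous_on_subset[OF _ sub] deriv DERIV_continuous
    unfolding continuous_on_eq_continuous_within by blast
  then obtain s where s: "a \<le> s" "s \<le> b" "q s = y"
    using IVT2'[OF y ab(3)] by blast
  have "inj_on q I"
  proof (rule inj_onI)
    fix x z assume "x \<in> I" "z \<in> I" "q x = q z"
    then show "x = z"
      using neg_deriv_imp_strict_antimono_on[OF I deriv neg]
      by (metis less_irrefl linorder_neqE_linordered_idom)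
  qed
  moreover have "s \<in> I"
    using sub s by auto
  ultimately show ?thesis
    using s the_inv_into_f_eq by metis
qed

lemma slope_bound_from_origin:
  fixes g dg :: "real \<Rightarrow> real"
  assumes lim: "(g \<longlongrightarrow> 0) (at_right 0)" and \<rho>: "0 < \<rho>"
    and cont: "continuous_on {0<..\<rho>} g"
    and deriv: "\<And>x. 0 < x \<Longrightarrow> x < \<rho> \<Longrightarrow> (g has_real_derivative dg x) (at x)"
    and slope: "\<And>x. 0 < x \<Longrightarrow> x < \<rho> \<Longrightarrow> c \<le> dg x"
  shows "c * \<rho> \<le> g \<rho>"
proof -
  have incr: "g \<epsilon> - c * \<epsilon> \<le> g \<rho> - c * \<rho>" if \<epsilon>: "0 < \<epsilon>" "\<epsilon> < \<rho>" for \<epsilon>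
  proof (rule DERIV_nonneg_imp_increasing_open[of \<epsilon> \<rho> "\<lambda>x. g x - c * x"])
    fix x assume "\<epsilon> < x" "x < \<rho>"
    then show "\<exists>y. ((\<lambda>x. g x - c * x) has_real_derivative y) (at x) \<and> 0 \<le> y"
      using \<epsilon> deriv slope by (intro exI[of _ "dg x - c * 1"]) (auto intro!: derivative_eq_intros)
  next
    show "continuous_on {\<epsilon>..\<rho>} (\<lambda>x. g x - c * x)"
      using \<epsilon> by (intro continuous_intros continuous_on_subset[OF cont]) auto
  qed (use \<epsilon> in simp)
  have "((\<lambda>\<epsilon>. g \<epsilon> - c * \<epsilon>) \<longlongrightarrow> 0 - c * 0) (at_right 0)"
    by (intro tendsto_intros lim)
  moreover have "\<forall>\<^sub>F \<epsilon> in at_right 0. g \<epsilon> - c * \<epsilon> \<le> g \<rho> - c * \<rho>"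
    unfolding eventually_at_right_field using \<rho> incr by blast
  ultimately have "0 - c * 0 \<le> g \<rho> - c * \<rho>"
    by (rule tendsto_upperbound) simp
  then show ?thesis
    by simp
qed

corollary slope_bound_from_origin':
  fixes g dg :: "real \<Rightarrow> real"
  assumes lim: "(g \<longlongrightarrow> 0) (at_right 0)" and \<rho>: "0 < \<rho>"
    and cont: "continuous_on {0<..\<rho>} g"
    and deriv: "\<And>x. 0 < x \<Longrightarrow> x < \<rho> \<Longrightarrow> (g has_real_derivative dg x) (at x)"
    and slope: "\<And>x. 0 < x \<Longrightarrow> x < \<rho> \<Longrightarrow> dg x \<le> c"
  shows "g \<rho> \<le> c * \<rho>"
proof -
  have "- c * \<rho> \<le> - g \<rho>"
  proof (rule slope_bound_from_origin[of "\<lambda>x. - g x" \<rho> "\<lambda>x. - dg x"])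
    show "((\<lambda>x. - g x) \<longlongrightarrow> 0) (at_right 0)"
      using tendsto_minus[OF lim] by simp
    show "continuous_on {0<..\<rho>} (\<lambda>x. - g x)"
      using continuous_on_minus[OF cont] .
  qed (use \<rho> deriv slope in \<open>auto intro: DERIV_minus\<close>)
  then show ?thesis
    by simp
qed

lemma barrier_principle:
  fixes u w :: "real \<Rightarrow> real"
  assumes cont: "continuous_on {0<..R} u" "continuous_on {0<..R} w"
    and step: "\<And>a b. 0 < a \<Longrightarrow> a < b \<Longrightarrow> b \<le> R \<Longrightarrow>
      (\<And>x. a < x \<Longrightarrow> x < b \<Longrightarrow> w x \<le> u x) \<Longrightarrow> u b \<le> u a \<and> w a \<le> w b"
    and start: "\<And>\<rho>. 0 < \<rho> \<Longrightarrow> \<rho> \<le> R \<Longrightarrow>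
      (\<And>x. 0 < x \<Longrightarrow> x < \<rho> \<Longrightarrow> w x \<le> u x) \<Longrightarrow> u \<rho> \<le> w \<rho>"
    and \<rho>: "0 < \<rho>" "\<rho> \<le> R"
  shows "u \<rho> \<le> w \<rho>"
proof (rule ccontr)
  assume above: "\<not> u \<rho> \<le> w \<rho>"
  show False
  proof (cases "\<exists>x0. 0 < x0 \<and> x0 < \<rho> \<and> u x0 \<le> w x0")
    case True
    then obtain x0 where x0: "0 < x0" "x0 < \<rho>" "u x0 \<le> w x0"
      by blast
    define S where "S = {x \<in> {x0..\<rho>}. u x \<le> w x}"
    have "closed S"
      unfolding S_def using x0 \<rho>
      by (intro continuous_on_closed_Collect_le continuous_on_subset[OF cont(1)]
          continuous_on_subset[OF cont(2)]) auto
    then have "compact S"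
      by (metis S_def bounded_closed_interval bounded_subset compact_eq_bounded_closed mem_Collect_eq subsetI)
    moreover have "x0 \<in> S"
      using x0 by (simp add: S_def)
    then have "S \<noteq> {}"
      by blast
    ultimately obtain \<sigma> where \<sigma>: "\<sigma> \<in> S" "\<And>x. x \<in> S \<Longrightarrow> x \<le> \<sigma>"
      using compact_attains_sup by metis
    have crossing: "x0 \<le> \<sigma>" "\<sigma> \<le> \<rho>" "u \<sigma> \<le> w \<sigma>"
      using \<sigma>(1) by (auto simp: S_def)
    then have "\<sigma> < \<rho>"
      using above by (cases "\<sigma> = \<rho>") auto
    have "w x \<le> u x" if "\<sigma> < x" "x < \<rho>" for x
    proof (rule ccontr)
      assume "\<not> w x \<le> u x"
      then have "x \<in> S"
        using that crossing by (auto simp: S_def)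
      then show False
        using \<sigma>(2) that by fastforce
    qed
    then have "u \<rho> \<le> u \<sigma> \<and> w \<sigma> \<le> w \<rho>"
      using step[of \<sigma> \<rho>] crossing \<open>\<sigma> < \<rho>\<close> x0 \<rho> by simp
    then show False
      using crossing above by simp
  next
    case False
    then show False
      using start[OF \<rho>] above by force
  qed
qed

text \<open>\<open>ratio_dominated g m0 m1 L\<close>: once arguments differ by a factor at least \<open>L\<close>, the growth of
  the positive part of \<open>g\<close> beats the distortion factor \<open>m1/m0\<close>.  The admissible ratios
  \<open>\<eta>\<^sub>1\<close> and \<open>1/\<eta>\<^sub>0\<close> of the corollary are exactly of this kind.\<close>
definition ratio_dominated :: "(real \<Rightarrow> real) \<Rightarrow> real \<Rightarrow> real \<Rightarrow> real \<Rightarrow> bool" where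
  "ratio_dominated g m0 m1 L \<longleftrightarrow> m1 / m0 \<le> L \<and>
     (\<forall>u v. 0 < u \<longrightarrow> L * u \<le> v \<longrightarrow> 0 < g u \<longrightarrow> m1 * g u \<le> m0 * g v)"

lemma ratio_dominated_bound: "ratio_dominated g m0 m1 L \<Longrightarrow> m1 / m0 \<le> L"
  by (simp add: ratio_dominated_def)

text \<open>Comparison of weighted values of \<open>g = \<phi>'\<close> at two ratio-separated points, with weights in
  \<open>[m0, m1]\<close>; where \<open>g\<close> is nonpositive, (A5) (monotonicity of \<open>v g(v)\<close>) takes over.\<close>
lemma ratio_dominated_comparison:
  fixes g :: "real \<Rightarrow> real"
  assumes A5: "mono_on {0<..} (\<lambda>v. v * g v)" and dom: "ratio_dominated g m0 m1 L"
    and m0: "0 < m0" and u: "0 < u" and uv: "L * u \<le> v"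
    and a: "m0 \<le> a" "a \<le> m1" and b: "m0 \<le> b" "b \<le> m1"
  shows "a * g u \<le> b * g v"
proof -
  have L: "m1 / m0 \<le> L" and ratio: "0 < g u \<Longrightarrow> m1 * g u \<le> m0 * g v"
    using dom u uv unfolding ratio_dominated_def by auto
  have "1 \<le> m1 / m0"
    using a m0 by simp
  then have Lu: "m1 / m0 * u \<le> v" and "u \<le> v"
    using L u uv by (smt (verit, best) mult_right_mono mult_cancel_right2)+
  show ?thesis
  proof (cases "0 < g u")
    case True
    have "0 < m1 * g u"
      using True a m0 by simp
    then have "0 < m0 * g v"
      using ratio[OF True] by linarith
    then have "0 < g v"
      using m0 by (simp add: zero_less_mult_iff)
    have "a * g u \<le> m1 * g u"
      using a True by (simp add: mult_right_mono)
    also have "\<dots> \<le> m0 * g v"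
      using ratio[OF True] .
    also have "\<dots> \<le> b * g v"
      using b \<open>0 < g v\<close> by (simp add: mult_right_mono)
    finally show ?thesis .
  next
    case False
    show ?thesis
    proof (cases "0 \<le> g v")
      case True
      then show ?thesis
        using False a b m0 by (smt (verit) mult_nonneg_nonneg mult_nonneg_nonpos)
    next
      case False
      have "u * g u \<le> v * g v"
        using mono_onD[OF A5] u \<open>u \<le> v\<close> by simp
      also have "\<dots> \<le> (m1 / m0 * u) * g v"
        using mult_right_mono_neg[OF Lu, of "g v"] False by simp
      finally have "m0 * g u \<le> m1 * g v"
        using u m0 by (simp add: field_simps)
      moreover have "a * g u \<le> m0 * g u" and "m1 * g v \<le> b * g v"
        using a b \<open>\<not> 0 < g u\<close> False by (simp_all add: mult_right_mono_neg)
      ultimately show ?thesis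
        by linarith
    qed
  qed
qed

text \<open>Pointwise sign bookkeeping for the energy derivative \<open>A q + w B (q Tk + S)\<close>: if it is
  nonpositive for the weight \<open>w = Tk\<close> and \<open>S \<ge> 0\<close> (this encodes \<open>t' \<ge> 0\<close>), then it stays
  nonpositive for every weight \<open>0 \<le> c \<le> Tk\<close>.\<close>
lemma energy_weight_sign:
  fixes A B Tk S q c :: real
  assumes A: "0 \<le> A" and B: "0 \<le> B" and Tk: "0 < Tk" and S: "0 \<le> S"
    and c: "0 \<le> c" "c \<le> Tk"
    and E: "A * q + Tk * (B * (q * Tk + S)) \<le> 0"
  shows "A * q + c * (B * (q * Tk + S)) \<le> 0"
proof (cases "0 \<le> B * (q * Tk + S)")
  case True
  then have "c * (B * (q * Tk + S)) \<le> Tk * (B * (q * Tk + S))"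
    using c by (simp add: mult_right_mono)
  then show ?thesis
    using E by linarith
next
  case False
  then have "q * Tk + S < 0"
    using B by (metis mult_nonneg_nonneg not_le)
  then have "q < 0"
    using Tk S by (smt (verit) mult_nonneg_nonneg)
  then have "A * q \<le> 0"
    using A by (simp add: mult_nonneg_nonpos)
  moreover have "c * (B * (q * Tk + S)) \<le> 0"
    using False c(1) by (simp add: mult_nonneg_nonpos)
  ultimately show ?thesis
    by linarith
qed

lemma frozen_energy_has_derivative:
  fixes p t dp dt Q dQ H dH :: "real \<Rightarrow> real" and k :: nat
  assumes pos: "0 < p x" "0 < t x"
    and p_deriv: "(p has_real_derivative dp x) (at x)"
    and t_deriv: "(t has_real_derivative dt x) (at x)"
    and Q_deriv: "(Q has_real_derivative dQ (p x)) (at (p x))"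
    and H_deriv: "(H has_real_derivative dH (p x * t x ^ k)) (at (p x * t x ^ k))"
  shows "((\<lambda>y. Q (p y) + c * H (p y * t y ^ k)) has_real_derivative
      dQ (p x) * dp x + c * (dH (p x * t x ^ k) *
        (dp x * t x ^ k + p x * (real k * t x ^ (k - 1) * dt x)))) (at x)"
proof -
  have "((\<lambda>y. p y * t y ^ k) has_real_derivative
      dp x * t x ^ k + real k * (dt x * t x ^ (k - Suc 0)) * p x) (at x)"
    by (intro DERIV_mult DERIV_power p_deriv t_deriv)
  then have "((\<lambda>y. p y * t y ^ k) has_real_derivative
      dp x * t x ^ k + p x * (real k * t x ^ (k - 1) * dt x)) (at x)"
    by (simp add: algebra_simps)
  from DERIV_chain2[OF H_deriv this] show ?thesis
    by (intro DERIV_add DERIV_cmult DERIV_chain2[OF Q_deriv p_deriv])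
qed

lemma frozen_energy_continuous:
  fixes p t Q dQ H dH :: "real \<Rightarrow> real" and k :: nat
  assumes p_cont: "continuous_on S p" and t_cont: "continuous_on S t"
    and pos: "\<And>x. x \<in> S \<Longrightarrow> 0 < p x" "\<And>x. x \<in> S \<Longrightarrow> 0 < t x"
    and Q_deriv: "\<And>y. 0 < y \<Longrightarrow> (Q has_real_derivative dQ y) (at y)"
    and H_deriv: "\<And>y. 0 < y \<Longrightarrow> (H has_real_derivative dH y) (at y)"
  shows "continuous_on S (\<lambda>y. Q (p y) + c * H (p y * t y ^ k))"
proof -
  have Q_cont: "continuous_on {0<..} Q" and H_cont: "continuous_on {0<..} H"
    using Q_deriv H_deriv by (auto intro!: continuous_at_imp_continuous_on DERIV_isCont)
  have "continuous_on S (\<lambda>y. p y * t y ^ k)"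
    by (intro continuous_intros p_cont t_cont)
  then have "continuous_on S (\<lambda>y. H (p y * t y ^ k))"
    by (rule continuous_on_compose2[OF H_cont]) (use pos in auto)
  moreover have "continuous_on S (\<lambda>y. Q (p y))"
    by (rule continuous_on_compose2[OF Q_cont p_cont]) (use pos in auto)
  ultimately show ?thesis
    by (intro continuous_intros)
qed

lemma frozen_energy_strict_mono:
  fixes p t Q H :: "real \<Rightarrow> real" and k :: nat
  assumes Q_mono: "mono_on {0<..} Q" and H_mono: "strict_mono_on {0<..} H"
    and p: "0 < p a" "p a < p b" and t: "0 < t a" "t a \<le> t b" and c: "0 < c"
  shows "Q (p a) + c * H (p a * t a ^ k) < Q (p b) + c * H (p b * t b ^ k)"
proof -
  have "p a * t a ^ k < p b * t a ^ k"
    using p t by simp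
  also have "\<dots> \<le> p b * t b ^ k"
    using p t by (intro mult_left_mono power_mono) auto
  finally have "H (p a * t a ^ k) < H (p b * t b ^ k)"
    using p t by (intro strict_mono_onD[OF H_mono]) auto
  moreover have "Q (p a) \<le> Q (p b)"
    using p by (intro mono_onD[OF Q_mono]) auto
  ultimately show ?thesis
    using c by (simp add: add_le_less_mono)
qed

text \<open>Then \<open>p b \<le> p a\<close>: otherwise \<open>Q(p) + t(a)\<^sup>k H(p t\<^sup>k)\<close>
  would both decrease and strictly increase from \<open>a\<close> to \<open>b\<close>.\<close>
lemma slope_nonincreasing_by_energy:
  fixes p t dp dt Q dQ H dH :: "real \<Rightarrow> real" and k :: nat
  assumes ab: "a < b"
    and p_cont: "continuous_on {a..b} p" and t_cont: "continuous_on {a..b} t"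
    and p_pos: "\<And>x. a \<le> x \<Longrightarrow> x \<le> b \<Longrightarrow> 0 < p x"
    and t_pos: "\<And>x. a \<le> x \<Longrightarrow> x \<le> b \<Longrightarrow> 0 < t x"
    and p_deriv: "\<And>x. a < x \<Longrightarrow> x < b \<Longrightarrow> (p has_real_derivative dp x) (at x)"
    and t_deriv: "\<And>x. a < x \<Longrightarrow> x < b \<Longrightarrow> (t has_real_derivative dt x) (at x)"
    and t_incr: "\<And>x. a < x \<Longrightarrow> x < b \<Longrightarrow> 0 \<le> dt x"
    and Q_mono: "mono_on {0<..} Q"
    and Q_deriv: "\<And>y. 0 < y \<Longrightarrow> (Q has_real_derivative dQ y) (at y)"
    and H_mono: "strict_mono_on {0<..} H"
    and H_deriv: "\<And>y. 0 < y \<Longrightarrow> (H has_real_derivative dH y) (at y)"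
    and energy: "\<And>x. a < x \<Longrightarrow> x < b \<Longrightarrow>
      dQ (p x) * dp x + t x ^ k * (dH (p x * t x ^ k) *
        (dp x * t x ^ k + p x * (real k * t x ^ (k - 1) * dt x))) \<le> 0"
  shows "p b \<le> p a"
proof (rule ccontr)
  assume "\<not> p b \<le> p a"
  define c where "c = t a ^ k"
  define K where "K y = Q (p y) + c * H (p y * t y ^ k)" for y
  have t_mono: "t a \<le> t x" if x: "a \<le> x" "x \<le> b" for x
  proof (rule DERIV_nonneg_imp_increasing_open[OF x(1)])
    fix y assume "a < y" "y < x"
    then have "a < y" "y < b"
      using x by auto
    then show "\<exists>d. (t has_real_derivative d) (at y) \<and> 0 \<le> d"
      using t_deriv t_incr by blast
  next
    show "continuous_on {a..x} t"
      using continuous_on_subset[OF t_cont] x by simp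
  qed
  have "K b \<le> K a"
  proof (rule DERIV_nonpos_imp_decreasing_open[OF less_imp_le[OF ab]])
    fix x assume x: "a < x" "x < b"
    then have pos: "0 < p x" "0 < t x"
      using p_pos t_pos by auto
    have dQ: "0 \<le> dQ (p x)" and dH: "0 \<le> dH (p x * t x ^ k)"
      using mono_on_deriv_nonneg[OF Q_mono _ _ Q_deriv]
        mono_on_deriv_nonneg[OF strict_mono_on_imp_mono_on[OF H_mono] _ _ H_deriv] pos
      by simp_all
    have S: "0 \<le> p x * (real k * t x ^ (k - 1) * dt x)"
      using pos t_incr[OF x] by simp
    have c: "0 \<le> c" "c \<le> t x ^ k"
      unfolding c_def using t_pos[of a] t_mono x ab by (auto intro: power_mono)
    have "dQ (p x) * dp x + c * (dH (p x * t x ^ k) *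
        (dp x * t x ^ k + p x * (real k * t x ^ (k - 1) * dt x))) \<le> 0"
      using pos(2) by (intro energy_weight_sign[OF dQ dH _ S c energy[OF x]]) simp
    moreover have "0 < p x * t x ^ k"
      using pos by simp
    ultimately show "\<exists>y. (K has_real_derivative y) (at x) \<and> y \<le> 0"
      unfolding K_def[abs_def]
      using frozen_energy_has_derivative[where p = p and t = t and dp = dp and dt = dt and Q = Q and dQ = dQ
          and H = H and dH = dH and k = k and c = c and x = x,
          OF pos p_deriv[OF x] t_deriv[OF x] Q_deriv[OF pos(1)] H_deriv]
      by blast
  next
    show "continuous_on {a..b} K"
      unfolding K_def[abs_def] using p_pos t_pos
      by (intro frozen_energy_continuous[OF p_cont t_cont _ _ Q_deriv H_deriv]) auto
  qed
  moreover have "K a < K b"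
    unfolding K_def using p_pos t_pos t_mono ab \<open>\<not> p b \<le> p a\<close>
    by (intro frozen_energy_strict_mono[OF Q_mono H_mono]) (auto simp: c_def)
  ultimately show False
    by simp
qed

text \<open>The mirror image of the previous lemma, obtained by reflecting the interval.\<close>
lemma slope_nondecreasing_by_energy:
  fixes p t dp dt Q dQ H dH :: "real \<Rightarrow> real" and k :: nat
  assumes ab: "a < b"
    and p_cont: "continuous_on {a..b} p" and t_cont: "continuous_on {a..b} t"
    and p_pos: "\<And>x. a \<le> x \<Longrightarrow> x \<le> b \<Longrightarrow> 0 < p x"
    and t_pos: "\<And>x. a \<le> x \<Longrightarrow> x \<le> b \<Longrightarrow> 0 < t x"
    and p_deriv: "\<And>x. a < x \<Longrightarrow> x < b \<Longrightarrow> (p has_real_derivative dp x) (at x)"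
    and t_deriv: "\<And>x. a < x \<Longrightarrow> x < b \<Longrightarrow> (t has_real_derivative dt x) (at x)"
    and t_decr: "\<And>x. a < x \<Longrightarrow> x < b \<Longrightarrow> dt x \<le> 0"
    and Q_mono: "mono_on {0<..} Q"
    and Q_deriv: "\<And>y. 0 < y \<Longrightarrow> (Q has_real_derivative dQ y) (at y)"
    and H_mono: "strict_mono_on {0<..} H"
    and H_deriv: "\<And>y. 0 < y \<Longrightarrow> (H has_real_derivative dH y) (at y)"
    and energy: "\<And>x. a < x \<Longrightarrow> x < b \<Longrightarrow>
      0 \<le> dQ (p x) * dp x + t x ^ k * (dH (p x * t x ^ k) *
        (dp x * t x ^ k + p x * (real k * t x ^ (k - 1) * dt x)))"
  shows "p a \<le> p b"
proof -
  have mirror_cont: "continuous_on {- b..- a} (\<lambda>x. g (- x))" if "continuous_on {a..b} g" for g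
    by (rule continuous_on_compose2[OF that continuous_on_minus[OF continuous_on_id]]) auto
  have "(\<lambda>x. p (- x)) (- a) \<le> (\<lambda>x. p (- x)) (- b)"
  proof (rule slope_nonincreasing_by_energy[where a = "- b" and b = "- a"
        and p = "\<lambda>x. p (- x)" and t = "\<lambda>x. t (- x)"
        and dp = "\<lambda>x. - dp (- x)" and dt = "\<lambda>x. - dt (- x)"
        and Q = Q and dQ = dQ and H = H and dH = dH and k = k])
    fix x assume x: "- b < x" "x < - a"
    then have x': "a < - x" "- x < b"
      by auto
    show "((\<lambda>x. p (- x)) has_real_derivative - dp (- x)) (at x)"
      using p_deriv[OF x'] DERIV_mirror by blast
    show "((\<lambda>x. t (- x)) has_real_derivative - dt (- x)) (at x)"
      using t_deriv[OF x'] DERIV_mirror by blast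
    show "0 \<le> - dt (- x)"
      using t_decr[OF x'] by simp
    show "dQ (p (- x)) * - dp (- x) + t (- x) ^ k * (dH (p (- x) * t (- x) ^ k) *
        (- dp (- x) * t (- x) ^ k + p (- x) * (real k * t (- x) ^ (k - 1) * - dt (- x)))) \<le> 0"
      using energy[OF x'] by (simp add: algebra_simps)
  qed (use ab p_pos t_pos mirror_cont[OF p_cont] mirror_cont[OF t_cont] Q_mono Q_deriv H_mono H_deriv
      in auto)
  then show ?thesis
    by simp
qed

text \<open>At \<open>s = 1\<close> the quotients defining \<open>q\<^sub>0\<close>, \<open>q\<^sub>1\<close> equal \<open>1\<close> wherever \<open>\<phi>'\<close> does not
  vanish, so \<open>q\<^sub>0(1) \<le> 1 \<le> q\<^sub>1(1)\<close> unless \<open>q\<^sub>1\<close> vanishes identically.\<close>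
lemma q_ratios_at_one:
  fixes g :: "real \<Rightarrow> real"
  assumes bdd1: "bdd_above ((\<lambda>v. g v / g (1 * v)) ` {t0<..})"
    and bdd0: "bdd_below ((\<lambda>v. g v / g (1 * v)) ` {t0 / 1<..})"
    and nonzero: "q1_fun g t0 s \<noteq> 0"
  shows "q0_fun g t0 1 \<le> 1 \<and> 1 \<le> q1_fun g t0 1"
proof -
  have "\<exists>v. t0 < v \<and> g v \<noteq> 0"
  proof (rule ccontr)
    assume "\<nexists>v. t0 < v \<and> g v \<noteq> 0"
    then have "q1_fun g t0 s = (SUP v\<in>{t0<..}. 0)"
      unfolding q1_fun_def by (intro SUP_cong) auto
    then show False
      using nonzero by simp
  qed
  then obtain v where v: "t0 < v" "g v \<noteq> 0"
    by blast
  then have one: "g v / g (1 * v) = 1"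
    by simp
  have "q0_fun g t0 1 \<le> g v / g (1 * v)"
    unfolding q0_fun_def by (rule cINF_lower[OF bdd0]) (use v in simp)
  moreover have "g v / g (1 * v) \<le> q1_fun g t0 1"
    unfolding q1_fun_def by (rule cSUP_upper[OF _ bdd1]) (use v in simp)
  ultimately show ?thesis
    unfolding one by simp
qed

lemma q1_threshold:
  fixes q dq :: "real \<Rightarrow> real"
  assumes deriv: "\<And>s. s \<in> {1..} \<Longrightarrow> (q has_real_derivative dq s) (at s within {1..})"
    and neg: "\<And>s. s \<in> {1..} \<Longrightarrow> dq s < 0"
    and lim: "(q \<longlongrightarrow> 0) at_top" and y: "0 < y" "y \<le> q 1"
  shows "1 \<le> the_inv_into {1..} q y \<and> (\<forall>s \<ge> the_inv_into {1..} q y. q s \<le> y)"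
proof -
  obtain B where B: "\<And>s. s \<ge> B \<Longrightarrow> q s < y"
    using order_tendstoD(2)[OF lim y(1)] unfolding eventually_at_top_linorder by blast
  have inverse: "the_inv_into {1..} q y \<in> {1..} \<and> q (the_inv_into {1..} q y) = y"
    using B[of "max B 1"] y
    by (intro strict_antimono_level_inverse[OF connected_Ici deriv neg, of 1 "max B 1"]) auto
  moreover have "q s \<le> y" if "the_inv_into {1..} q y \<le> s" for s
    using inverse that
      neg_deriv_imp_strict_antimono_on[OF connected_Ici deriv neg, of "the_inv_into {1..} q y" s]
    by (cases "s = the_inv_into {1..} q y") (auto intro: less_imp_le)
  ultimately show ?thesis
    by auto
qed

lemma q0_threshold:
  fixes q dq :: "real \<Rightarrow> real"
  assumes deriv: "\<And>s. s \<in> {0<..1} \<Longrightarrow> (q has_real_derivative dq s) (at s within {0<..1})"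
    and neg: "\<And>s. s \<in> {0<..1} \<Longrightarrow> dq s < 0"
    and lim: "filterlim q at_top (at_right 0)" and y: "q 1 \<le> y"
  shows "the_inv_into {0<..1} q y \<in> {0<..1} \<and>
    (\<forall>s. 0 < s \<longrightarrow> s \<le> the_inv_into {0<..1} q y \<longrightarrow> y \<le> q s)"
proof -
  have "\<forall>\<^sub>F s in at_right 0. y < q s"
    using lim by (simp add: filterlim_at_top_dense)
  then obtain b where b: "0 < b" "\<And>s. 0 < s \<Longrightarrow> s < b \<Longrightarrow> y < q s"
    unfolding eventually_at_right_field by auto
  define a where "a = min (b / 2) (1 / 2)"
  have a: "0 < a" "a < b" "a \<le> 1"
    using b by (auto simp: a_def)
  have inverse: "the_inv_into {0<..1} q y \<in> {0<..1} \<and> q (the_inv_into {0<..1} q y) = y"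
    using b(2)[OF a(1,2)] y a
    by (intro strict_antimono_level_inverse[OF connected_Ioc deriv neg, of a 1]) auto
  moreover have "y \<le> q s" if "0 < s" "s \<le> the_inv_into {0<..1} q y" for s
    using inverse that
      neg_deriv_imp_strict_antimono_on[OF connected_Ioc deriv neg, of s "the_inv_into {0<..1} q y"]
    by (cases "s = the_inv_into {0<..1} q y") (auto intro: less_imp_le)
  ultimately show ?thesis
    by auto
qed

lemma q1_ratio_dominated:
  fixes g :: "real \<Rightarrow> real"
  assumes g_mono: "mono_on {0<..} g" and g_sign: "\<And>u. 0 < u \<Longrightarrow> 0 < g u \<Longrightarrow> t0 < u"
    and bdd: "\<And>s. 1 \<le> s \<Longrightarrow> bdd_above ((\<lambda>v. g v / g (s * v)) ` {t0<..})"
    and m: "0 < m0" "0 < m1"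
    and s1: "1 \<le> s1" "\<And>s. s1 \<le> s \<Longrightarrow> q1_fun g t0 s \<le> m0 / m1"
  shows "ratio_dominated g m0 m1 (max (m1 / m0) s1)"
  unfolding ratio_dominated_def
proof (intro conjI allI impI)
  fix u v assume u: "0 < u" and uv: "max (m1 / m0) s1 * u \<le> v" and gu: "0 < g u"
  define s where "s = v / u"
  have "s1 * u \<le> v"
    using uv u by (smt (verit) max.cobounded2 mult_right_mono)
  then have s: "s1 \<le> s" "v = s * u"
    using u by (auto simp: s_def field_simps)
  have "g u / g (s * u) \<le> q1_fun g t0 s"
    unfolding q1_fun_def using g_sign[OF u gu] bdd[of s] s s1(1)
    by (intro cSUP_upper) auto
  also have "\<dots> \<le> m0 / m1"
    using s1(2)[OF s(1)] .
  finally have ratio: "g u / g v \<le> m0 / m1"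
    using s by simp
  have "g u \<le> g v"
    using u s s1(1) by (intro mono_onD[OF g_mono]) (auto simp: mult_le_cancel_right1)
  then show "m1 * g u \<le> m0 * g v"
    using ratio gu m by (simp add: field_simps)
qed simp

lemma q0_ratio_dominated:
  fixes g :: "real \<Rightarrow> real"
  assumes g_sign: "\<And>u. 0 < u \<Longrightarrow> 0 < g u \<Longrightarrow> t0 < u"
    and bdd: "\<And>s. 0 < s \<Longrightarrow> s \<le> 1 \<Longrightarrow> bdd_below ((\<lambda>v. g v / g (s * v)) ` {t0 / s<..})"
    and m: "0 < m0" "0 < m1"
    and s0: "0 < s0" "s0 \<le> 1" "\<And>s. 0 < s \<Longrightarrow> s \<le> s0 \<Longrightarrow> m1 / m0 \<le> q0_fun g t0 s"
  shows "ratio_dominated g m0 m1 (1 / min (m0 / m1) s0)"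
  unfolding ratio_dominated_def
proof (intro conjI allI impI)
  have "0 < min (m0 / m1) s0"
    using m s0 by simp
  then show "m1 / m0 \<le> 1 / min (m0 / m1) s0"
    using m by (simp add: field_simps min_def)
  fix u v assume u: "0 < u" and uv: "1 / min (m0 / m1) s0 * u \<le> v" and gu: "0 < g u"
  define s where "s = u / v"
  have v: "0 < v"
    using uv u \<open>0 < min (m0 / m1) s0\<close> by (smt (verit) divide_pos_pos mult_pos_pos)
  have "u \<le> min (m0 / m1) s0 * v"
    using uv \<open>0 < min (m0 / m1) s0\<close> by (simp add: field_simps)
  also have "\<dots> \<le> s0 * v"
    using v by (simp add: mult_right_mono)
  finally have "u \<le> s0 * v" .
  then have s: "0 < s" "s \<le> s0" "u = s * v"
    using u v by (auto simp: s_def field_simps)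
  have "m1 / m0 \<le> q0_fun g t0 s"
    using s0(3) s by simp
  also have "\<dots> \<le> g v / g (s * v)"
    unfolding q0_fun_def using g_sign[OF u gu] bdd[of s] s s0(2)
    by (intro cINF_lower) (auto simp: field_simps)
  finally show "m1 * g u \<le> m0 * g v"
    using s gu m by (simp add: field_simps)
qed

lemma eta_ratios_dominated:
  fixes g :: "real \<Rightarrow> real"
  assumes g_mono: "mono_on {0<..} g" and g_sign: "\<And>u. 0 < u \<Longrightarrow> 0 < g u \<Longrightarrow> t0 < u"
    and q1_bdd: "\<And>s. s \<ge> 1 \<Longrightarrow> bdd_above ((\<lambda>v. g v / g (s * v)) ` {t0<..})"
    and q0_bdd: "\<And>s. 0 < s \<Longrightarrow> s \<le> 1 \<Longrightarrow> bdd_below ((\<lambda>v. g v / g (s * v)) ` {t0 / s<..})"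
    and q1_C1: "\<exists>dq1. (\<forall>s\<ge>1. (q1_fun g t0 has_real_derivative dq1 s) (at s within {1..}))
                      \<and> continuous_on {1..} dq1 \<and> (\<forall>s\<ge>1. dq1 s < 0)"
    and q0_C1: "\<exists>dq0. (\<forall>s\<in>{0<..1}. (q0_fun g t0 has_real_derivative dq0 s) (at s within {0<..1}))
                      \<and> continuous_on {0<..1} dq0 \<and> (\<forall>s\<in>{0<..1}. dq0 s < 0)"
    and q1_lim: "(q1_fun g t0 \<longlongrightarrow> 0) at_top"
    and q0_lim: "filterlim (q0_fun g t0) at_top (at_right 0)"
    and m: "0 < m0" "m0 \<le> m1"
  shows "ratio_dominated g m0 m1 (max (m1 / m0) (the_inv_into {1..} (q1_fun g t0) (m0 / m1)))"
    and "0 < min (m0 / m1) (the_inv_into {0<..1} (q0_fun g t0) (m1 / m0))"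
    and "ratio_dominated g m0 m1 (1 / min (m0 / m1) (the_inv_into {0<..1} (q0_fun g t0) (m1 / m0)))"
proof -
  obtain dq1 where dq1: "\<And>s. s \<in> {1..} \<Longrightarrow> (q1_fun g t0 has_real_derivative dq1 s) (at s within {1..})"
      "\<And>s. s \<in> {1..} \<Longrightarrow> dq1 s < 0"
    using q1_C1 by blast
  obtain dq0 where dq0: "\<And>s. s \<in> {0<..1} \<Longrightarrow> (q0_fun g t0 has_real_derivative dq0 s) (at s within {0<..1})"
      "\<And>s. s \<in> {0<..1} \<Longrightarrow> dq0 s < 0"
    using q0_C1 by blast
  have "q1_fun g t0 2 < q1_fun g t0 1"
    by (rule neg_deriv_imp_strict_antimono_on[OF connected_Ici dq1]) auto
  then obtain s where "q1_fun g t0 s \<noteq> 0"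
    by (metis less_irrefl)
  then have at_one: "q0_fun g t0 1 \<le> 1 \<and> 1 \<le> q1_fun g t0 1"
    by (rule q_ratios_at_one[OF q1_bdd[OF order_refl] q0_bdd[OF zero_less_one order_refl]])
  have m1: "0 < m1"
    using m by simp
  have ratios: "0 < m0 / m1" "m0 / m1 \<le> 1" "1 \<le> m1 / m0"
    using m m1 by auto
  have s1: "1 \<le> the_inv_into {1..} (q1_fun g t0) (m0 / m1)"
      "\<forall>s \<ge> the_inv_into {1..} (q1_fun g t0) (m0 / m1). q1_fun g t0 s \<le> m0 / m1"
    using q1_threshold[OF dq1 q1_lim ratios(1)] at_one ratios(2) by auto
  have s0: "the_inv_into {0<..1} (q0_fun g t0) (m1 / m0) \<in> {0<..1}"
      "\<forall>s. 0 < s \<longrightarrow> s \<le> the_inv_into {0<..1} (q0_fun g t0) (m1 / m0) \<longrightarrow> m1 / m0 \<le> q0_fun g t0 s"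
    using q0_threshold[OF dq0 q0_lim] at_one ratios(3) by auto
  show "ratio_dominated g m0 m1 (max (m1 / m0) (the_inv_into {1..} (q1_fun g t0) (m0 / m1)))"
    using s1 by (intro q1_ratio_dominated[OF g_mono g_sign q1_bdd m(1) m1]) auto
  show "0 < min (m0 / m1) (the_inv_into {0<..1} (q0_fun g t0) (m1 / m0))"
    using s0 m m1 by simp
  show "ratio_dominated g m0 m1 (1 / min (m0 / m1) (the_inv_into {0<..1} (q0_fun g t0) (m1 / m0)))"
    using s0 by (intro q0_ratio_dominated[OF g_sign q0_bdd m(1) m1]) auto
qed

locale equilibrium_solution =
  fixes n :: nat
    and f df :: "real \<Rightarrow> real"
    and \<phi> d\<phi> dd\<phi> :: "real \<Rightarrow> real"
    and h dh ddh :: "real \<Rightarrow> real"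
    and \<mu>0 \<mu>1 :: real
    and r dr ddr :: "real \<Rightarrow> real"
  assumes n2: "n \<ge> 2"
    and f_deriv: "\<And>x. x \<ge> 0 \<Longrightarrow> (f has_real_derivative df x) (at x within {0..})"
    and h_deriv: "\<And>x. x > 0 \<Longrightarrow> (h has_real_derivative dh x) (at x)"
    and dh_deriv: "\<And>x. x > 0 \<Longrightarrow> (dh has_real_derivative ddh x) (at x)"
    and h_sconv: "strictly_convex_on {0<..} h"
    and phi_deriv: "\<And>x. x > 0 \<Longrightarrow> (\<phi> has_real_derivative d\<phi> x) (at x)"
    and dphi_deriv: "\<And>x. x > 0 \<Longrightarrow> (d\<phi> has_real_derivative dd\<phi> x) (at x)"
    and phi_conv: "convex_on {0<..} \<phi>"
    and A5: "mono_on {0<..} (\<lambda>v. v * d\<phi> v)"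
    and mu0_pos: "0 < \<mu>0"
    and df_bounds: "\<And>\<rho>. \<rho> \<ge> 0 \<Longrightarrow> \<mu>0 \<le> df \<rho> \<and> df \<rho> \<le> \<mu>1"
    and f_bounds: "\<And>\<rho>. \<rho> \<ge> 0 \<Longrightarrow> \<mu>0 * \<rho> \<le> f \<rho> \<and> f \<rho> \<le> \<mu>1 * \<rho>"
    and r_deriv: "\<And>\<rho>. \<rho> \<in> {0<..1} \<Longrightarrow> (r has_real_derivative dr \<rho>) (at \<rho> within {0<..1})"
    and dr_cont: "continuous_on {0<..1} dr"
    and dr_deriv: "\<And>\<rho>. \<rho> \<in> {0<..<1} \<Longrightarrow> (dr has_real_derivative ddr \<rho>) (at \<rho>)"
    and dr_pos: "\<And>\<rho>. \<rho> \<in> {0<..1} \<Longrightarrow> dr \<rho> > 0"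
    and r_regular: "(r \<longlongrightarrow> 0) (at_right 0)"
    and equil: "\<And>\<rho>. \<rho> \<in> {0<..<1} \<Longrightarrow>
        f \<rho> * (dd\<phi> (dr \<rho>) + ddh (dr \<rho> * tau_fun f r \<rho> ^ (n - 1)) * tau_fun f r \<rho> ^ (2 * (n - 1)))
            * ddr \<rho>
        = real (n - 1) * (df (r \<rho>) * d\<phi> (tau_fun f r \<rho>) - df \<rho> * d\<phi> (dr \<rho>))
          - real (n - 1) * (df (r \<rho>) * dr \<rho> - df \<rho> * tau_fun f r \<rho>)
              * ddh (dr \<rho> * tau_fun f r \<rho> ^ (n - 1)) * dr \<rho> * tau_fun f r \<rho> ^ (2 * n - 3)"
begin

abbreviation \<tau> :: "real \<Rightarrow> real" where
  "\<tau> \<equiv> tau_fun f r"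

lemma mu_le: "\<mu>0 \<le> \<mu>1"
  using df_bounds[of 0] by simp

lemma f_at:
  assumes "0 < x"
  shows "(f has_real_derivative df x) (at x)"
proof -
  have "at x within {0..} = at x"
    using assms by (intro at_within_open_subset[of _ "{0<..}"]) auto
  then show ?thesis
    using f_deriv[of x] assms by simp
qed

lemma f_pos: "0 < x \<Longrightarrow> 0 < f x"
  using f_bounds[of x] mu0_pos by (smt (verit) mult_pos_pos)

lemma r_at:
  assumes "0 < x" "x < 1"
  shows "(r has_real_derivative dr x) (at x)"
proof -
  have "at x within {0<..1} = at x"
    using assms by (intro at_within_open_subset[of _ "{0<..<1}"]) auto
  then show ?thesis
    using r_deriv[of x] assms by simp
qed

lemma r_cont: "continuous_on {0<..1} r"
  using r_deriv DERIV_continuous continuous_on_eq_continuous_within by blast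

text \<open>Regularity and \<open>r' > 0\<close> make \<open>r\<close> positive on \<open>(0, 1]\<close>.\<close>
lemma r_pos:
  assumes x: "0 < x" "x \<le> 1"
  shows "0 < r x"
proof -
  have "0 * (x / 2) \<le> r (x / 2)"
    using x r_at
    by (intro slope_bound_from_origin[where dg = dr, OF r_regular _ continuous_on_subset[OF r_cont]])
      (auto intro!: less_imp_le[OF dr_pos])
  also have "r (x / 2) < r x"
  proof (rule DERIV_pos_imp_increasing_open[of "x / 2" x r])
    fix y assume "x / 2 < y" "y < x"
    then show "\<exists>d. (r has_real_derivative d) (at y) \<and> 0 < d"
      using x r_at dr_pos by (intro exI[of _ "dr y"]) auto
  next
    show "continuous_on {x / 2..x} r"
      using x by (intro continuous_on_subset[OF r_cont]) auto
  qed (use x in simp)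
  finally show ?thesis
    by simp
qed

lemma dphi_mono: "mono_on {0<..} d\<phi>"
  by (intro mono_onI convex_on_deriv_mono[OF phi_conv _ _ phi_deriv]) auto

lemma dh_strict_mono: "strict_mono_on {0<..} dh"
  by (intro strict_mono_onI strictly_convex_on_deriv_strict_mono[OF h_sconv _ _ h_deriv]) auto

lemma tau_eq: "\<tau> = (\<lambda>x. f (r x) / f x)"
  by (simp add: tau_fun_def[abs_def])

lemma tau_pos: "0 < x \<Longrightarrow> x \<le> 1 \<Longrightarrow> 0 < \<tau> x"
  using f_pos r_pos by (simp add: tau_eq)

lemma tau_cont: "continuous_on {0<..1} \<tau>"
proof -
  have f_cont: "continuous_on {0<..} f"
    using f_at by (intro continuous_at_imp_continuous_on) (auto intro: DERIV_isCont)
  have "continuous_on {0<..1} (\<lambda>x. f (r x))"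
    by (rule continuous_on_compose2[OF f_cont r_cont]) (auto intro: r_pos)
  moreover have "continuous_on {0<..1} f"
    by (rule continuous_on_subset[OF f_cont]) auto
  ultimately show ?thesis
    unfolding tau_eq using f_pos by (intro continuous_intros) force+
qed

definition tau_slope :: "real \<Rightarrow> real" where
  "tau_slope x = (df (r x) * dr x - df x * \<tau> x) / f x"

lemma tau_at:
  assumes x: "0 < x" "x < 1"
  shows "(\<tau> has_real_derivative tau_slope x) (at x)"
proof -
  have "((\<lambda>x. f (r x)) has_real_derivative df (r x) * dr x) (at x)"
    using x by (intro DERIV_chain2[OF f_at r_at] r_pos) auto
  then have "(\<tau> has_real_derivative (df (r x) * dr x * f x - f (r x) * df x) / (f x * f x)) (at x)"
    unfolding tau_eq using x f_pos[of x] by (intro DERIV_divide f_at) auto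
  moreover have "(df (r x) * dr x * f x - f (r x) * df x) / (f x * f x) = tau_slope x"
    using f_pos[of x] x by (simp add: tau_slope_def tau_eq field_simps)
  ultimately show ?thesis
    by simp
qed

text \<open>The forcing term of the equilibrium equation, and the derivative of
  \<open>\<phi>'(r') + c h'(r' \<tau>\<^sup>n\<^sup>-\<^sup>1)\<close> at a point where the frozen weight \<open>c\<close> equals \<open>\<tau>\<^sup>n\<^sup>-\<^sup>1\<close>.\<close>
definition forcing :: "real \<Rightarrow> real" where
  "forcing x = df (r x) * d\<phi> (\<tau> x) - df x * d\<phi> (dr x)"

definition energy_rate :: "real \<Rightarrow> real" where
  "energy_rate x = dd\<phi> (dr x) * ddr x + \<tau> x ^ (n - 1) * (ddh (dr x * \<tau> x ^ (n - 1)) *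
      (ddr x * \<tau> x ^ (n - 1) + dr x * (real (n - 1) * \<tau> x ^ (n - 1 - 1) * tau_slope x)))"

lemma energy_identity:
  assumes x: "0 < x" "x < 1"
  shows "f x * energy_rate x = real (n - 1) * forcing x"
proof -
  obtain m where "n = m + 2"
    using n2 by (metis add.commute le_Suc_ex)
  then have k: "n - 1 = Suc m" "2 * Suc m = Suc m + Suc m" "2 * n - 3 = Suc m + m"
    by auto
  have slope: "df (r x) * dr x - df x * \<tau> x = f x * tau_slope x"
    using f_pos[of x] x by (simp add: tau_slope_def)
  define T where "T = \<tau> x ^ Suc m"
  define U where "U = \<tau> x ^ m"
  have equation: "f x * (dd\<phi> (dr x) + ddh (dr x * T) * (T * T)) * ddr x
      = real (Suc m) * forcing x - real (Suc m) * (f x * tau_slope x) * ddh (dr x * T) * dr x * (T * U)"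
    using equil[of x] x
    unfolding k power_add T_def[symmetric] U_def[symmetric] slope forcing_def[symmetric] by simp
  have "f x * (dd\<phi> (dr x) * ddr x + T * (ddh (dr x * T) * (ddr x * T + dr x * (real (Suc m) * U * tau_slope x))))
      = f x * (dd\<phi> (dr x) + ddh (dr x * T) * (T * T)) * ddr x
        + real (Suc m) * (f x * tau_slope x) * ddh (dr x * T) * dr x * (T * U)"
    by (simp add: algebra_simps)
  also have "\<dots> = real (Suc m) * forcing x"
    using equation by simp
  finally show ?thesis
    unfolding energy_rate_def k(1) diff_Suc_1 T_def U_def .
qed

lemma forcing_nonpos_above:
  assumes dom: "ratio_dominated d\<phi> \<mu>0 \<mu>1 e" and x: "0 < x" "x \<le> 1"
    and above: "e * \<tau> x \<le> dr x"
  shows "forcing x \<le> 0"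
proof -
  have "df (r x) * d\<phi> (\<tau> x) \<le> df x * d\<phi> (dr x)"
    using df_bounds[of "r x"] df_bounds[of x] r_pos[OF x] x
    by (intro ratio_dominated_comparison[OF A5 dom mu0_pos tau_pos[OF x] above]) auto
  then show ?thesis
    by (simp add: forcing_def)
qed

lemma forcing_nonneg_below:
  assumes dom: "ratio_dominated d\<phi> \<mu>0 \<mu>1 (1 / e)" and e: "0 < e" and x: "0 < x" "x \<le> 1"
    and below: "dr x \<le> e * \<tau> x"
  shows "0 \<le> forcing x"
proof -
  have "1 / e * dr x \<le> \<tau> x"
    using below e by (simp add: field_simps)
  then have "df x * d\<phi> (dr x) \<le> df (r x) * d\<phi> (\<tau> x)"
    using df_bounds[of "r x"] df_bounds[of x] r_pos[OF x] x dr_pos[of x]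
    by (intro ratio_dominated_comparison[OF A5 dom mu0_pos]) auto
  then show ?thesis
    by (simp add: forcing_def)
qed

lemma tau_slope_nonneg_above:
  assumes e: "\<mu>1 / \<mu>0 \<le> e" and x: "0 < x" "x \<le> 1" and above: "e * \<tau> x \<le> dr x"
  shows "0 \<le> tau_slope x"
proof -
  have "df x * \<tau> x \<le> \<mu>1 * \<tau> x"
    using df_bounds[of x] tau_pos[OF x] x by (simp add: mult_right_mono)
  also have "\<dots> \<le> \<mu>0 * (e * \<tau> x)"
    using e mu0_pos tau_pos[OF x] by (simp add: field_simps mult_right_mono)
  also have "\<dots> \<le> \<mu>0 * dr x"
    using above mu0_pos by simp
  also have "\<dots> \<le> df (r x) * dr x"
    using df_bounds[of "r x"] r_pos[OF x] dr_pos[of x] x by (simp add: mult_right_mono)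
  finally show ?thesis
    using f_pos[of x] x by (simp add: tau_slope_def)
qed

lemma tau_slope_nonpos_below:
  assumes e: "e \<le> \<mu>0 / \<mu>1" and x: "0 < x" "x \<le> 1" and below: "dr x \<le> e * \<tau> x"
  shows "tau_slope x \<le> 0"
proof -
  have mu1: "0 < \<mu>1"
    using mu0_pos mu_le by simp
  have "df (r x) * dr x \<le> \<mu>1 * dr x"
    using df_bounds[of "r x"] r_pos[OF x] dr_pos[of x] x by (simp add: mult_right_mono)
  also have "\<dots> \<le> \<mu>1 * (e * \<tau> x)"
    using below mu1 by simp
  also have "\<dots> \<le> \<mu>0 * \<tau> x"
    using e mu1 tau_pos[OF x] by (simp add: field_simps mult_right_mono)
  also have "\<dots> \<le> df x * \<tau> x"
    using df_bounds[of x] tau_pos[OF x] x by (simp add: mult_right_mono)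
  finally show ?thesis
    using f_pos[of x] x by (simp add: tau_slope_def divide_nonpos_pos)
qed

lemma energy_rate_nonpos:
  assumes x: "0 < x" "x < 1" and "forcing x \<le> 0"
  shows "energy_rate x \<le> 0"
proof -
  have "f x * energy_rate x \<le> 0"
    using energy_identity[OF x] assms(3) by (simp add: mult_nonneg_nonpos)
  then show ?thesis
    using f_pos[of x] x by (simp add: mult_le_0_iff)
qed

lemma energy_rate_nonneg:
  assumes x: "0 < x" "x < 1" and "0 \<le> forcing x"
  shows "0 \<le> energy_rate x"
proof -
  have "0 \<le> f x * energy_rate x"
    using energy_identity[OF x] assms(3) by simp
  then show ?thesis
    using f_pos[of x] x by (simp add: zero_le_mult_iff)
qed

lemma step_above:
  assumes dom: "ratio_dominated d\<phi> \<mu>0 \<mu>1 e" and ab: "0 < a" "a < b" "b \<le> 1"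
    and above: "\<And>x. a < x \<Longrightarrow> x < b \<Longrightarrow> e * \<tau> x \<le> dr x"
  shows "dr b \<le> dr a \<and> \<tau> a \<le> \<tau> b"
proof -
  have inside: "0 < x" "x < 1" if "a < x" "x < b" for x
    using that ab by auto
  have slope: "0 \<le> tau_slope x" if "a < x" "x < b" for x
    using tau_slope_nonneg_above[OF ratio_dominated_bound[OF dom] _ _ above[OF that]] inside[OF that]
    by simp
  have energy: "energy_rate x \<le> 0" if "a < x" "x < b" for x
    using energy_rate_nonpos[OF inside[OF that] forcing_nonpos_above[OF dom _ _ above[OF that]]]
      inside[OF that] by simp
  have cont: "continuous_on {a..b} dr" "continuous_on {a..b} \<tau>"
    using ab by (auto intro!: continuous_on_subset[OF dr_cont] continuous_on_subset[OF tau_cont])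
  have "dr b \<le> dr a"
  proof (rule slope_nonincreasing_by_energy[where p = dr and t = \<tau> and dp = ddr and dt = tau_slope
        and Q = d\<phi> and dQ = dd\<phi> and H = dh and dH = ddh and k = "n - 1"])
    fix x assume x: "a < x" "x < b"
    show "(dr has_real_derivative ddr x) (at x)" "(\<tau> has_real_derivative tau_slope x) (at x)"
      using dr_deriv tau_at inside[OF x] by auto
    show "0 \<le> tau_slope x"
      using slope[OF x] .
  qed (use ab cont dr_pos tau_pos dphi_mono dphi_deriv dh_strict_mono dh_deriv
      energy[unfolded energy_rate_def] in auto)
  moreover have "\<tau> a \<le> \<tau> b"
  proof (rule DERIV_nonneg_imp_increasing_open[of a b \<tau>])
    fix x assume x: "a < x" "x < b"
    then show "\<exists>y. (\<tau> has_real_derivative y) (at x) \<and> 0 \<le> y"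
      using tau_at[OF inside[OF x]] slope[OF x] by blast
  qed (use ab cont in auto)
  ultimately show ?thesis
    by simp
qed

lemma step_below:
  assumes dom: "ratio_dominated d\<phi> \<mu>0 \<mu>1 (1 / e)" and e: "0 < e"
    and ab: "0 < a" "a < b" "b \<le> 1"
    and below: "\<And>x. a < x \<Longrightarrow> x < b \<Longrightarrow> dr x \<le> e * \<tau> x"
  shows "dr a \<le> dr b \<and> \<tau> b \<le> \<tau> a"
proof -
  have inside: "0 < x" "x < 1" if "a < x" "x < b" for x
    using that ab by auto
  have "e \<le> \<mu>0 / \<mu>1"
    using ratio_dominated_bound[OF dom] e mu0_pos mu_le by (simp add: field_simps)
  then have slope: "tau_slope x \<le> 0" if "a < x" "x < b" for x
    using tau_slope_nonpos_below[OF _ _ _ below[OF that]] inside[OF that] by simp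
  have energy: "0 \<le> energy_rate x" if "a < x" "x < b" for x
    using energy_rate_nonneg[OF inside[OF that] forcing_nonneg_below[OF dom e _ _ below[OF that]]]
      inside[OF that] by simp
  have cont: "continuous_on {a..b} dr" "continuous_on {a..b} \<tau>"
    using ab by (auto intro!: continuous_on_subset[OF dr_cont] continuous_on_subset[OF tau_cont])
  have "dr a \<le> dr b"
  proof (rule slope_nondecreasing_by_energy[where p = dr and t = \<tau> and dp = ddr and dt = tau_slope
        and Q = d\<phi> and dQ = dd\<phi> and H = dh and dH = ddh and k = "n - 1"])
    fix x assume x: "a < x" "x < b"
    show "(dr has_real_derivative ddr x) (at x)" "(\<tau> has_real_derivative tau_slope x) (at x)"
      using dr_deriv tau_at inside[OF x] by auto
    show "tau_slope x \<le> 0"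
      using slope[OF x] .
  qed (use ab cont dr_pos tau_pos dphi_mono dphi_deriv dh_strict_mono dh_deriv
      energy[unfolded energy_rate_def] in auto)
  moreover have "\<tau> b \<le> \<tau> a"
  proof (rule DERIV_nonpos_imp_decreasing_open[of a b \<tau>])
    fix x assume x: "a < x" "x < b"
    then show "\<exists>y. (\<tau> has_real_derivative y) (at x) \<and> y \<le> 0"
      using tau_at[OF inside[OF x]] slope[OF x] by blast
  qed (use ab cont in auto)
  ultimately show ?thesis
    by simp
qed

lemma slope_le_tau_from_chord:
  assumes \<rho>: "0 < \<rho>" "\<rho> \<le> 1" and chord: "dr \<rho> * \<rho> \<le> r \<rho>"
  shows "dr \<rho> \<le> \<mu>1 / \<mu>0 * \<tau> \<rho>"
proof -
  have "\<mu>0 * (dr \<rho> * f \<rho>) \<le> \<mu>0 * (dr \<rho> * (\<mu>1 * \<rho>))"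
    using f_bounds[of \<rho>] dr_pos[of \<rho>] \<rho> mu0_pos by (simp add: mult_left_mono)
  also have "\<dots> = \<mu>1 * (\<mu>0 * (dr \<rho> * \<rho>))"
    by simp
  also have "\<dots> \<le> \<mu>1 * (\<mu>0 * r \<rho>)"
    using chord mu0_pos mu_le by (simp add: mult_left_mono)
  also have "\<dots> \<le> \<mu>1 * f (r \<rho>)"
    using f_bounds[of "r \<rho>"] r_pos[OF \<rho>] mu0_pos mu_le by (simp add: mult_left_mono)
  finally show ?thesis
    using mu0_pos f_pos[of \<rho>] \<rho> by (simp add: tau_eq field_simps)
qed

lemma tau_le_slope_from_chord:
  assumes \<rho>: "0 < \<rho>" "\<rho> \<le> 1" and chord: "r \<rho> \<le> dr \<rho> * \<rho>"
  shows "\<mu>0 / \<mu>1 * \<tau> \<rho> \<le> dr \<rho>"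
proof -
  have mu1: "0 < \<mu>1"
    using mu0_pos mu_le by simp
  have "\<mu>0 * f (r \<rho>) \<le> \<mu>0 * (\<mu>1 * r \<rho>)"
    using f_bounds[of "r \<rho>"] r_pos[OF \<rho>] mu0_pos by simp
  also have "\<dots> \<le> \<mu>0 * (\<mu>1 * (dr \<rho> * \<rho>))"
    using chord mu0_pos mu1 by simp
  also have "\<dots> = \<mu>1 * dr \<rho> * (\<mu>0 * \<rho>)"
    by simp
  also have "\<dots> \<le> \<mu>1 * dr \<rho> * f \<rho>"
    using f_bounds[of \<rho>] mu1 dr_pos[of \<rho>] \<rho> by (simp add: mult_left_mono)
  finally show ?thesis
    using mu1 f_pos[of \<rho>] \<rho> by (simp add: tau_eq field_simps)
qed

theorem upper_bound:
  assumes dom: "ratio_dominated d\<phi> \<mu>0 \<mu>1 e" and \<rho>: "0 < \<rho>" "\<rho> \<le> 1"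
  shows "dr \<rho> \<le> e * \<tau> \<rho>"
proof -
  have e: "\<mu>1 / \<mu>0 \<le> e" "0 \<le> e"
    using ratio_dominated_bound[OF dom] mu0_pos mu_le by (auto intro: order_trans[rotated])
  show ?thesis
  proof (rule barrier_principle[where u = dr and w = "\<lambda>x. e * \<tau> x", OF dr_cont _ _ _ \<rho>])
    show "continuous_on {0<..1} (\<lambda>x. e * \<tau> x)"
      by (intro continuous_intros tau_cont)
  next
    fix a b assume ab: "0 < a" "a < b" "b \<le> 1" and above: "\<And>x. a < x \<Longrightarrow> x < b \<Longrightarrow> e * \<tau> x \<le> dr x"
    show "dr b \<le> dr a \<and> e * \<tau> a \<le> e * \<tau> b"
      using step_above[OF dom ab above] e(2) by (simp add: mult_left_mono)
  next
    fix \<rho> assume \<rho>: "0 < \<rho>" "\<rho> \<le> 1" and above: "\<And>x. 0 < x \<Longrightarrow> x < \<rho> \<Longrightarrow> e * \<tau> x \<le> dr x"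
    have "dr \<rho> * \<rho> \<le> r \<rho>"
    proof (rule slope_bound_from_origin[OF r_regular \<rho>(1)])
      show "continuous_on {0<..\<rho>} r"
        using \<rho> by (intro continuous_on_subset[OF r_cont]) auto
      fix x assume x: "0 < x" "x < \<rho>"
      show "(r has_real_derivative dr x) (at x)"
        using x \<rho> by (intro r_at) auto
      show "dr \<rho> \<le> dr x"
        using step_above[OF dom x(1) x(2) \<rho>(2)] above x by simp
    qed
    then have "dr \<rho> \<le> \<mu>1 / \<mu>0 * \<tau> \<rho>"
      by (rule slope_le_tau_from_chord[OF \<rho>])
    also have "\<dots> \<le> e * \<tau> \<rho>"
      using mult_right_mono[OF e(1) less_imp_le[OF tau_pos[OF \<rho>]]] .
    finally show "dr \<rho> \<le> e * \<tau> \<rho>" .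
  qed
qed

theorem lower_bound:
  assumes dom: "ratio_dominated d\<phi> \<mu>0 \<mu>1 (1 / e)" and e: "0 < e" and \<rho>: "0 < \<rho>" "\<rho> \<le> 1"
  shows "e * \<tau> \<rho> \<le> dr \<rho>"
proof -
  have e_le: "e \<le> \<mu>0 / \<mu>1"
    using ratio_dominated_bound[OF dom] e mu0_pos mu_le by (simp add: field_simps)
  show ?thesis
  proof (rule barrier_principle[where u = "\<lambda>x. e * \<tau> x" and w = dr, OF _ dr_cont _ _ \<rho>])
    show "continuous_on {0<..1} (\<lambda>x. e * \<tau> x)"
      by (intro continuous_intros tau_cont)
  next
    fix a b assume ab: "0 < a" "a < b" "b \<le> 1" and below: "\<And>x. a < x \<Longrightarrow> x < b \<Longrightarrow> dr x \<le> e * \<tau> x"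
    show "e * \<tau> b \<le> e * \<tau> a \<and> dr a \<le> dr b"
      using step_below[OF dom e ab below] e by (simp add: mult_left_mono)
  next
    fix \<rho> assume \<rho>: "0 < \<rho>" "\<rho> \<le> 1" and below: "\<And>x. 0 < x \<Longrightarrow> x < \<rho> \<Longrightarrow> dr x \<le> e * \<tau> x"
    have "r \<rho> \<le> dr \<rho> * \<rho>"
    proof (rule slope_bound_from_origin'[OF r_regular \<rho>(1)])
      show "continuous_on {0<..\<rho>} r"
        using \<rho> by (intro continuous_on_subset[OF r_cont]) auto
      fix x assume x: "0 < x" "x < \<rho>"
      show "(r has_real_derivative dr x) (at x)"
        using x \<rho> by (intro r_at) auto
      show "dr x \<le> dr \<rho>"
        using step_below[OF dom e x(1) x(2) \<rho>(2)] below x by simp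
    qed
    have "e * \<tau> \<rho> \<le> \<mu>0 / \<mu>1 * \<tau> \<rho>"
      using mult_right_mono[OF e_le less_imp_le[OF tau_pos[OF \<rho>]]] .
    also have "\<dots> \<le> dr \<rho>"
      by (rule tau_le_slope_from_chord[OF \<rho> \<open>r \<rho> \<le> dr \<rho> * \<rho>\<close>])
    finally show "e * \<tau> \<rho> \<le> dr \<rho>" .
  qed
qed

end

theorem corollary4p3:
  fixes n :: nat
    and \<kappa> f df :: "real \<Rightarrow> real"
    and \<phi> d\<phi> dd\<phi> :: "real \<Rightarrow> real"
    and h dh ddh :: "real \<Rightarrow> real"
    and t0 :: real
    and \<mu>0 \<mu>1 lam :: real
    and r dr ddr :: "real \<Rightarrow> real"
  assumes n2: "n \<ge> 2"
    \<comment> \<open>kappa continuous on [0,inf), integrability conditions\<close>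
    and kappa_cont: "continuous_on {0..} \<kappa>"
    and mu_pos: "mu_pos_inf \<kappa> \<le> 1"
    and mu_neg: "mu_neg_inf \<kappa> < \<infinity>"
    \<comment> \<open>f'' + kappa f = 0 on [0,inf), f(0)=0, f'(0)=1; df = f'\<close>
    and f_deriv: "\<And>x. x \<ge> 0 \<Longrightarrow> (f has_real_derivative df x) (at x within {0..})"
    and df_deriv: "\<And>x. x \<ge> 0 \<Longrightarrow> (df has_real_derivative (- \<kappa> x * f x)) (at x within {0..})"
    and f0: "f 0 = 0" and df0: "df 0 = 1"
    \<comment> \<open>(A1): h is C^2 and strictly convex (on (0,inf))\<close>
    and h_deriv: "\<And>x. x > 0 \<Longrightarrow> (h has_real_derivative dh x) (at x)"
    and dh_deriv: "\<And>x. x > 0 \<Longrightarrow> (dh has_real_derivative ddh x) (at x)"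
    and ddh_cont: "continuous_on {0<..} ddh"
    and h_sconv: "strictly_convex_on {0<..} h"
    \<comment> \<open>(A4): phi : (0,inf) -> (0,inf) is C^2 and convex\<close>
    and phi_pos: "\<And>x. x > 0 \<Longrightarrow> \<phi> x > 0"
    and phi_deriv: "\<And>x. x > 0 \<Longrightarrow> (\<phi> has_real_derivative d\<phi> x) (at x)"
    and dphi_deriv: "\<And>x. x > 0 \<Longrightarrow> (d\<phi> has_real_derivative dd\<phi> x) (at x)"
    and ddphi_cont: "continuous_on {0<..} dd\<phi>"
    and phi_conv: "convex_on {0<..} \<phi>"
    \<comment> \<open>(A5): v phi'(v) is increasing\<close>
    and A5: "mono_on {0<..} (\<lambda>v. v * d\<phi> v)"
    \<comment> \<open>(A6)\<close>
    and t0: "(t0 > 0 \<and> d\<phi> t0 = 0) \<or> (t0 = 0 \<and> (d\<phi> \<longlongrightarrow> 0) (at_right 0))"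
    and q1_bdd: "\<And>s. s \<ge> 1 \<Longrightarrow> bdd_above ((\<lambda>v. d\<phi> v / d\<phi> (s * v)) ` {t0<..})"
    and q0_bdd: "\<And>s. 0 < s \<Longrightarrow> s \<le> 1 \<Longrightarrow> bdd_below ((\<lambda>v. d\<phi> v / d\<phi> (s * v)) ` {t0 / s<..})"
    and q1_C1: "\<exists>dq1. (\<forall>s\<ge>1. (q1_fun d\<phi> t0 has_real_derivative dq1 s) (at s within {1..}))
                      \<and> continuous_on {1..} dq1 \<and> (\<forall>s\<ge>1. dq1 s < 0)"
    and q0_C1: "\<exists>dq0. (\<forall>s\<in>{0<..1}. (q0_fun d\<phi> t0 has_real_derivative dq0 s) (at s within {0<..1}))
                      \<and> continuous_on {0<..1} dq0 \<and> (\<forall>s\<in>{0<..1}. dq0 s < 0)"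
    and q1_lim: "(q1_fun d\<phi> t0 \<longlongrightarrow> 0) at_top"
    and q0_lim: "filterlim (q0_fun d\<phi> t0) at_top (at_right 0)"
    \<comment> \<open>bounds on f and f'\<close>
    and mu0_pos: "0 < \<mu>0" and mu01: "\<mu>0 \<le> \<mu>1"
    and df_bounds: "\<And>\<rho>. \<rho> \<ge> 0 \<Longrightarrow> \<mu>0 \<le> df \<rho> \<and> df \<rho> \<le> \<mu>1"
    and f_bounds: "\<And>\<rho>. \<rho> \<ge> 0 \<Longrightarrow> \<mu>0 * \<rho> \<le> f \<rho> \<and> f \<rho> \<le> \<mu>1 * \<rho>"
    \<comment> \<open>r is a regular equilibrium solution with r(1) = lam > 0; dr = r', ddr = r''\<close>
    and lam_pos: "lam > 0"
    and r_deriv: "\<And>\<rho>. \<rho> \<in> {0<..1} \<Longrightarrow> (r has_real_derivative dr \<rho>) (at \<rho> within {0<..1})"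
    and dr_cont: "continuous_on {0<..1} dr"
    and dr_deriv: "\<And>\<rho>. \<rho> \<in> {0<..<1} \<Longrightarrow> (dr has_real_derivative ddr \<rho>) (at \<rho>)"
    and dr_pos: "\<And>\<rho>. \<rho> \<in> {0<..1} \<Longrightarrow> dr \<rho> > 0"
    and r_regular: "(r \<longlongrightarrow> 0) (at_right 0)"
    and r1: "r 1 = lam"
    and equil: "\<And>\<rho>. \<rho> \<in> {0<..<1} \<Longrightarrow>
        f \<rho> * (dd\<phi> (dr \<rho>) + ddh (dr \<rho> * tau_fun f r \<rho> ^ (n - 1)) * tau_fun f r \<rho> ^ (2 * (n - 1)))
            * ddr \<rho>
        = real (n - 1) * (df (r \<rho>) * d\<phi> (tau_fun f r \<rho>) - df \<rho> * d\<phi> (dr \<rho>))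
          - real (n - 1) * (df (r \<rho>) * dr \<rho> - df \<rho> * tau_fun f r \<rho>)
              * ddh (dr \<rho> * tau_fun f r \<rho> ^ (n - 1)) * dr \<rho> * tau_fun f r \<rho> ^ (2 * n - 3)"
  shows "\<forall>\<rho>\<in>{0<..1}.
           min (\<mu>0 / \<mu>1) (the_inv_into {0<..1} (q0_fun d\<phi> t0) (\<mu>1 / \<mu>0)) * tau_fun f r \<rho> \<le> dr \<rho>
         \<and> dr \<rho> \<le> max (\<mu>1 / \<mu>0) (the_inv_into {1..} (q1_fun d\<phi> t0) (\<mu>0 / \<mu>1)) * tau_fun f r \<rho>"
proof -
  interpret equilibrium_solution n f df \<phi> d\<phi> dd\<phi> h dh ddh \<mu>0 \<mu>1 r dr ddr
    by unfold_locales (rule assms; assumption)+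
  \<comment> \<open>By (A6) and monotonicity of \<open>\<phi>'\<close>, \<open>\<phi>'\<close> can be positive only beyond \<open>t0\<close>.\<close>
  have dphi_sign: "t0 < u" if "0 < u" "0 < d\<phi> u" for u
    using t0 that mono_onD[OF dphi_mono, of u t0] by force
  note eta = eta_ratios_dominated[OF dphi_mono dphi_sign q1_bdd q0_bdd q1_C1 q0_C1 q1_lim q0_lim
      mu0_pos mu01]
  show ?thesis
    using upper_bound[OF eta(1)] lower_bound[OF eta(3) eta(2)] by simp
qed

end
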